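(* Let $n\ge 2$, let $\Gamma\in\mathcal{M}_n(\mathbb{R})$ be symmetric with entries in $[0,1]$, zero diagonal, and at least one strictly positive off-diagonal entry in each row, such that the weighted graph with weight matrix $\Gamma$ is connected. Let $\boldsymbol{\eta}=\Gamma\mathbf{1}_n$, $L=\operatorname{diag}(\boldsymbol{\eta})-\Gamma$, let $\lambda,\mu>0$, $A=\lambda\mathsf{I}_n+\mu L$, and let $\mathsf{P}_a\coloneqq\operatorname{diag}(A)=\lambda\mathsf{I}_n+\mu\operatorname{diag}(\boldsymbol{\eta})$. Then every eigenvalue $\theta$ of $\mathsf{P}_a^{-1}A$ satisfies \[ \frac{\lambda}{\lambda+\mu\max\boldsymbol{\eta}}\le\theta\le\min\Big\{2,\ \frac{n}{n-1}\,\frac{\rho(L)}{a(L)}\Big\}. \]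
   Context: $\mathbf{1}_n$ is the all-ones vector, $\mathsf{I}_n$ the identity. $\rho(L)$ is the spectral radius (largest eigenvalue) of $L$, and $a(L)$ is the algebraic connectivity of $L$, i.e. its second smallest eigenvalue counted with multiplicity (positive since the graph is connected). *)

theory Defs
  imports "Jordan_Normal_Form.Spectral_Radius"
begin

definition weight_graph_connected :: "nat \<Rightarrow> real mat \<Rightarrow> bool" where
  "weight_graph_connected n W =
     (\<forall>i<n. \<forall>j<n. (i, j) \<in> {(k, l). k < n \<and> l < n \<and> W $$ (k, l) > 0}\<^sup>*)"

definition sorted_real_eigenvalues :: "real mat \<Rightarrow> real list" where
  "sorted_real_eigenvalues M =
     (SOME es. sorted es \<and> char_poly M = (\<Prod>e\<leftarrow>es. [:- e, 1:]))"

definition algebraic_connectivity :: "real mat \<Rightarrow> real" where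
  "algebraic_connectivity M = sorted_real_eigenvalues M ! 1"

end

(*
  The eigenvalue problem for P^-1 A is the generalised problem A v = theta P v, with A symmetric
  and P a positive diagonal matrix; hence theta is real and equals the Rayleigh quotient
  x^T A x / x^T P x of a real eigenvector x. Since x^T A x = lambda |x|^2 + mu x^T L x and
  x^T P x = lambda |x|^2 + mu sum_i eta_i x_i^2, the lower bound follows from x^T L x >= 0, the
  bound 2 from x^T L x <= 2 sum_i eta_i x_i^2, and the last bound from x^T L x <= rho(L) |x|^2
  together with Fiedler's inequality eta_i >= (n - 1) / n * a(L).

  Fiedler's inequality is the positive semidefiniteness of L + a(L) (J / n - I), with J the
  all-ones matrix, and a(L) > 0 because connectivity makes 0 a simple eigenvalue of L.
*)

theory Submission
  imports Defs "HOL-Analysis.Function_Topology"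
begin

section \<open>Quadratic forms\<close>

text \<open>Vectors are modelled as functions \<open>nat \<Rightarrow> real\<close>, of which only the entries below \<open>n\<close>
  are used.\<close>

definition quad_form :: "real mat \<Rightarrow> nat \<Rightarrow> (nat \<Rightarrow> real) \<Rightarrow> real" where
  "quad_form N n x = (\<Sum>i<n. \<Sum>j<n. x i * N $$ (i, j) * x j)"

definition sum_sq :: "nat \<Rightarrow> (nat \<Rightarrow> real) \<Rightarrow> real" where
  "sum_sq n x = (\<Sum>i<n. x i ^ 2)"

definition mat_apply :: "real mat \<Rightarrow> nat \<Rightarrow> (nat \<Rightarrow> real) \<Rightarrow> nat \<Rightarrow> real" where
  "mat_apply N n x i = (\<Sum>j<n. N $$ (i, j) * x j)"

definition sym_mat :: "nat \<Rightarrow> real mat \<Rightarrow> bool" where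
  "sym_mat n N \<longleftrightarrow> (\<forall>i<n. \<forall>j<n. N $$ (i, j) = N $$ (j, i))"

definition pos_semidef :: "nat \<Rightarrow> real mat \<Rightarrow> bool" where
  "pos_semidef n N \<longleftrightarrow> (\<forall>x. 0 \<le> quad_form N n x)"

definition pos_def :: "nat \<Rightarrow> real mat \<Rightarrow> bool" where
  "pos_def n N \<longleftrightarrow> (\<forall>x. (\<exists>i<n. x i \<noteq> 0) \<longrightarrow> 0 < quad_form N n x)"

lemma sum_sq_nonneg: "0 \<le> sum_sq n x"
  unfolding sum_sq_def by (simp add: sum_nonneg)

lemma sum_sq_eq_0_iff: "sum_sq n x = 0 \<longleftrightarrow> (\<forall>i<n. x i = 0)"
  unfolding sum_sq_def by (auto simp: sum_nonneg_eq_0_iff)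

lemma sum_sq_pos_iff: "0 < sum_sq n x \<longleftrightarrow> (\<exists>i<n. x i \<noteq> 0)"
  using sum_sq_nonneg[of n x] sum_sq_eq_0_iff[of n x] by auto

lemma sum_sq_smult: "sum_sq n (\<lambda>i. c * x i) = c\<^sup>2 * sum_sq n x"
  unfolding sum_sq_def by (simp add: sum_distrib_left power_mult_distrib)

lemma quad_form_smult: "quad_form N n (\<lambda>i. c * x i) = c\<^sup>2 * quad_form N n x"
  unfolding quad_form_def by (simp add: sum_distrib_left power2_eq_square algebra_simps)

lemma quad_form_eq_0_if_zero: "\<forall>i<n. x i = 0 \<Longrightarrow> quad_form N n x = 0"
  unfolding quad_form_def by simp

lemma quad_form_mat_apply: "quad_form N n x = (\<Sum>i<n. x i * mat_apply N n x i)"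
  unfolding quad_form_def mat_apply_def by (simp add: sum_distrib_left mult.assoc)

lemma quad_form_unit_vector:
  assumes "i < n"
  shows "quad_form N n (\<lambda>k. if k = i then 1 else 0) = N $$ (i, i)"
proof -
  have delta: "(\<Sum>j<n. f j * (if j = i then 1 else 0)) = f i" for f :: "nat \<Rightarrow> real"
  proof -
    have "(\<Sum>j<n. f j * (if j = i then 1 else 0)) = (\<Sum>j<n. if j = i then f j else 0)"
      by (rule sum.cong) auto
    then show ?thesis using assms by (simp add: sum.delta)
  qed
  have delta': "(\<Sum>k<n. (if k = i then 1 else 0) * f k) = f i" for f :: "nat \<Rightarrow> real"
    using delta[of f] by (simp add: mult.commute)
  show ?thesis
    unfolding quad_form_mat_apply mat_apply_def by (simp only: delta delta')
qed

lemma quad_form_eigen: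
  assumes "\<And>i. i < n \<Longrightarrow> mat_apply N n x i = c * x i"
  shows "quad_form N n x = c * sum_sq n x"
  unfolding quad_form_mat_apply sum_sq_def
  by (simp add: assms sum_distrib_left power2_eq_square algebra_simps)

lemma quad_form_pencil:
  assumes "\<And>i. i < n \<Longrightarrow> mat_apply N n x i = c * d i * x i"
  shows "quad_form N n x = c * (\<Sum>i<n. d i * (x i)\<^sup>2)"
  unfolding quad_form_mat_apply
  by (simp add: assms sum_distrib_left power2_eq_square algebra_simps)

lemma quad_form_smult_one_add:
  assumes "N \<in> carrier_mat n n"
  shows "quad_form (lam \<cdot>\<^sub>m 1\<^sub>m n + mu \<cdot>\<^sub>m N) n x = lam * sum_sq n x + mu * quad_form N n x"
proof -
  have "quad_form (lam \<cdot>\<^sub>m 1\<^sub>m n + mu \<cdot>\<^sub>m N) n x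
      = (\<Sum>i<n. \<Sum>j<n. (if i = j then lam * (x i * x j) else 0) + mu * (x i * N $$ (i, j) * x j))"
    unfolding quad_form_def using assms by (intro sum.cong refl) (auto simp: algebra_simps)
  also have "\<dots> = lam * sum_sq n x + mu * quad_form N n x"
    unfolding quad_form_def sum_sq_def
    by (simp add: sum.distrib sum_distrib_left sum.delta power2_eq_square)
  finally show ?thesis .
qed

lemma mat_apply_sym_swap:
  assumes "sym_mat n N"
  shows "(\<Sum>i<n. x i * mat_apply N n z i) = (\<Sum>i<n. z i * mat_apply N n x i)"
proof -
  have "(\<Sum>i<n. x i * mat_apply N n z i) = (\<Sum>j<n. \<Sum>i<n. x i * N $$ (i, j) * z j)"
    unfolding mat_apply_def by (subst sum.swap) (simp add: sum_distrib_left mult.assoc)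
  also have "\<dots> = (\<Sum>j<n. z j * mat_apply N n x j)"
    using assms unfolding sym_mat_def mat_apply_def
    by (auto simp: sum_distrib_left algebra_simps intro!: sum.cong)
  finally show ?thesis .
qed

lemma quad_form_add_smult:
  assumes "sym_mat n N"
  shows "quad_form N n (\<lambda>i. x i + t * z i)
    = quad_form N n x + 2 * t * (\<Sum>i<n. z i * mat_apply N n x i) + t\<^sup>2 * quad_form N n z"
proof -
  have "quad_form N n (\<lambda>i. x i + t * z i) = quad_form N n x
      + t * (\<Sum>i<n. \<Sum>j<n. x i * N $$ (i, j) * z j) + t * (\<Sum>i<n. z i * (\<Sum>j<n. N $$ (i, j) * x j))
      + t\<^sup>2 * quad_form N n z"
    unfolding quad_form_def by (simp add: sum_distrib_left sum.distrib power2_eq_square algebra_simps)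
  moreover have "(\<Sum>i<n. \<Sum>j<n. x i * N $$ (i, j) * z j) = (\<Sum>i<n. x i * mat_apply N n z i)"
    unfolding mat_apply_def by (simp add: sum_distrib_left mult.assoc)
  ultimately show ?thesis
    using mat_apply_sym_swap[OF assms, of x z] unfolding mat_apply_def by simp
qed

text \<open>A positive semidefinite form vanishes only on the kernel: otherwise moving from \<open>x\<close>
  a little against \<open>N x\<close> would make it negative.\<close>

lemma pos_semidef_quad_form_eq_0D:
  assumes sym: "sym_mat n N" and psd: "pos_semidef n N" and x: "quad_form N n x = 0"
    and i: "i < n"
  shows "mat_apply N n x i = 0"
proof -
  define w where "w = mat_apply N n x"
  define W where "W = sum_sq n w"
  define q where "q = quad_form N n w"
  have expand: "quad_form N n (\<lambda>i. x i + t * w i) = 2 * t * W + t\<^sup>2 * q" for t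
    using quad_form_add_smult[OF sym, of x t w] x
    unfolding W_def q_def w_def sum_sq_def by (simp add: power2_eq_square)
  have "W = 0"
  proof (rule ccontr)
    assume "W \<noteq> 0"
    then have "W > 0" using sum_sq_nonneg unfolding W_def by (metis order_le_less)
    have "q \<ge> 0" using psd unfolding pos_semidef_def q_def by simp
    define t where "t = - W / (q + 1)"
    have "t * (q + 1) = - W" using \<open>q \<ge> 0\<close> unfolding t_def by simp
    then have tq: "t * q = - W - t" by (simp add: algebra_simps)
    have t: "t < 0" unfolding t_def using \<open>W > 0\<close> \<open>q \<ge> 0\<close> by (simp add: divide_neg_pos)
    have "2 * t * W + t\<^sup>2 * q = t * (2 * W + t * q)"
      by (simp add: power2_eq_square algebra_simps)
    also have "\<dots> = t * (W - t)" using tq by simp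
    also have "\<dots> < 0" using t \<open>W > 0\<close> by (intro mult_neg_pos) auto
    finally have "2 * t * W + t\<^sup>2 * q < 0" .
    then show False using psd expand unfolding pos_semidef_def by (metis not_le)
  qed
  then show ?thesis using i sum_sq_eq_0_iff unfolding W_def w_def by blast
qed

lemma compactin_unit_sphere:
  "compactin (product_topology (\<lambda>_. euclideanreal) {..<n})
    {x \<in> topspace (product_topology (\<lambda>_. euclideanreal) {..<n}). sum_sq n x = 1}"
  (is "compactin ?X ?K")
proof -
  have "continuous_map ?X euclideanreal (sum_sq n)"
    unfolding sum_sq_def by (intro continuous_intros) auto
  then have "closedin ?X ?K"
    using closedin_continuous_map_preimage[of ?X euclideanreal "sum_sq n" "{1}"]
    by (auto simp: vimage_def Collect_conj_eq)
  moreover have "?K \<subseteq> PiE {..<n} (\<lambda>_. {-1..1})"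
  proof
    fix x assume x: "x \<in> ?K"
    have "\<bar>x i\<bar> \<le> 1" if "i < n" for i
    proof -
      have "(x i)\<^sup>2 \<le> sum_sq n x"
        unfolding sum_sq_def by (rule member_le_sum) (use that in auto)
      then show ?thesis using x abs_le_square_iff[of "x i" 1] by simp
    qed
    then show "x \<in> PiE {..<n} (\<lambda>_. {-1..1})" using x by (auto simp: PiE_iff abs_le_iff)
  qed
  moreover have "compactin ?X (PiE {..<n} (\<lambda>_. {-1..1}))"
    by (subst compactin_PiE) auto
  ultimately show ?thesis by (metis closed_compactin)
qed

lemma quad_form_attains_min_on_sphere:
  assumes "0 < n"
  obtains x where "sum_sq n x = 1" "\<And>y. sum_sq n y = 1 \<Longrightarrow> quad_form N n x \<le> quad_form N n y"
proof -
  let ?X = "product_topology (\<lambda>_. euclideanreal) {..<n}"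
  let ?K = "{x \<in> topspace ?X. sum_sq n x = 1}"
  have cont: "continuous_map ?X euclideanreal (quad_form N n)"
    unfolding quad_form_def by (intro continuous_intros) auto
  have "compact (quad_form N n ` ?K)"
    using image_compactin[OF compactin_unit_sphere cont] by simp
  moreover have "restrict (\<lambda>i. if i = 0 then 1 else 0) {..<n} \<in> ?K"
    using assms by (simp add: sum_sq_def if_distrib[of "\<lambda>t. t ^ 2"] cong: if_cong)
  ultimately have "\<exists>m \<in> quad_form N n ` ?K. \<forall>z \<in> quad_form N n ` ?K. m \<le> z"
    by (intro compact_attains_inf) blast+
  then obtain x where x: "x \<in> ?K" and min: "\<forall>y \<in> ?K. quad_form N n x \<le> quad_form N n y"
    by auto
  show ?thesis
  proof (rule that)
    show "sum_sq n x = 1" using x by simp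
    fix y assume "sum_sq n y = 1"
    then have "sum_sq n (restrict y {..<n}) = 1" by (simp add: sum_sq_def)
    moreover have "restrict y {..<n} \<in> topspace ?X" by simp
    ultimately have "quad_form N n x \<le> quad_form N n (restrict y {..<n})" using min by blast
    then show "quad_form N n x \<le> quad_form N n y" by (simp add: quad_form_def)
  qed
qed

lemma quad_form_ge_sum_sq_if_sphere:
  assumes "\<And>y. sum_sq n y = 1 \<Longrightarrow> s \<le> quad_form N n y"
  shows "s * sum_sq n y \<le> quad_form N n y"
proof (cases "sum_sq n y = 0")
  case True
  moreover have "quad_form N n y = 0"
    using True by (simp add: sum_sq_eq_0_iff quad_form_eq_0_if_zero)
  ultimately show ?thesis by simp
next
  case False
  then have pos: "0 < sum_sq n y" using sum_sq_nonneg order_le_less by metis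
  define c where "c = 1 / sqrt (sum_sq n y)"
  have c: "c\<^sup>2 * sum_sq n y = 1" using pos by (simp add: c_def power_divide)
  then have "s \<le> c\<^sup>2 * quad_form N n y"
    using assms[of "\<lambda>i. c * y i"] by (simp add: sum_sq_smult quad_form_smult)
  then have "s * sum_sq n y \<le> c\<^sup>2 * quad_form N n y * sum_sq n y"
    using pos by (simp add: mult_right_mono)
  also have "\<dots> = quad_form N n y" using c by (simp add: algebra_simps)
  finally show ?thesis .
qed

lemma min_eigenpair:
  assumes "0 < n" and sym: "sym_mat n N"
  obtains s x where "\<exists>i<n. x i \<noteq> 0" "\<And>i. i < n \<Longrightarrow> mat_apply N n x i = s * x i"
    "\<And>y. s * sum_sq n y \<le> quad_form N n y"
proof -
  obtain x where x: "sum_sq n x = 1" and min: "\<And>y. sum_sq n y = 1 \<Longrightarrow> quad_form N n x \<le> quad_form N n y"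
    using quad_form_attains_min_on_sphere[OF assms(1)] by blast
  define s where "s = quad_form N n x"
  have bound: "s * sum_sq n y \<le> quad_form N n y" for y
    using quad_form_ge_sum_sq_if_sphere min unfolding s_def by blast
  define M where "M = mat n n (\<lambda>(i, j). N $$ (i, j) - (if i = j then s else 0))"
  have M_apply: "mat_apply M n y i = mat_apply N n y i - s * y i" if "i < n" for y i
  proof -
    have "mat_apply M n y i = (\<Sum>j<n. N $$ (i, j) * y j - (if j = i then s * y j else 0))"
      unfolding M_def mat_apply_def using that by (intro sum.cong) (auto simp: algebra_simps)
    also have "\<dots> = mat_apply N n y i - s * y i"
      using that by (simp add: sum_subtractf mat_apply_def)
    finally show ?thesis .
  qed
  have M_quad: "quad_form M n y = quad_form N n y - s * sum_sq n y" for y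
    unfolding quad_form_mat_apply sum_sq_def
    by (simp add: M_apply right_diff_distrib sum_subtractf sum_distrib_left power2_eq_square algebra_simps)
  have "sym_mat n M" using sym unfolding sym_mat_def M_def by auto
  moreover have "pos_semidef n M" unfolding pos_semidef_def M_quad using bound by simp
  moreover have "quad_form M n x = 0" unfolding M_quad s_def x by simp
  ultimately have "mat_apply N n x i = s * x i" if "i < n" for i
    using pos_semidef_quad_form_eq_0D[of n M x i] M_apply[OF that] that by simp
  moreover have "\<exists>i<n. x i \<noteq> 0" using x sum_sq_pos_iff[of n x] by simp
  ultimately show ?thesis using that bound by blast
qed

section \<open>Eigenvalues of symmetric matrices\<close>

lemma mult_mat_vec_sum:
  fixes A :: "'a :: comm_semiring_0 mat"
  assumes "A \<in> carrier_mat m n" "v \<in> carrier_vec n" "i < m"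
  shows "(A *\<^sub>v v) $ i = (\<Sum>j<n. A $$ (i, j) * v $ j)"
  using assms by (auto simp: scalar_prod_def lessThan_atLeast0 intro!: sum.cong)

lemma eigenvalueI_components:
  fixes A :: "'a :: field mat"
  assumes "A \<in> carrier_mat n n" "\<exists>i<n. v i \<noteq> 0"
    "\<And>i. i < n \<Longrightarrow> (\<Sum>j<n. A $$ (i, j) * v j) = s * v i"
  shows "eigenvalue A s"
proof -
  have "A *\<^sub>v vec n v = s \<cdot>\<^sub>v vec n v"
    by (rule eq_vecI) (use assms in \<open>auto simp del: index_mult_mat_vec simp: mult_mat_vec_sum\<close>)
  moreover have "vec n v \<noteq> 0\<^sub>v n" using assms(2) by (metis index_vec index_zero_vec(1))
  ultimately show ?thesis
    unfolding eigenvalue_def eigenvector_def using assms(1) by (metis carrier_matD(1) vec_carrier)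
qed

lemma eigenvalueE_components:
  fixes A :: "'a :: field mat"
  assumes "A \<in> carrier_mat n n" "eigenvalue A s"
  obtains v where "\<exists>i<n. v i \<noteq> 0" "\<And>i. i < n \<Longrightarrow> (\<Sum>j<n. A $$ (i, j) * v j) = s * v i"
proof -
  from assms obtain v where v: "v \<in> carrier_vec n" "v \<noteq> 0\<^sub>v n" "A *\<^sub>v v = s \<cdot>\<^sub>v v"
    unfolding eigenvalue_def eigenvector_def by auto
  then have "\<exists>i<n. v $ i \<noteq> 0" by (metis eq_vecI carrier_vecD index_zero_vec)
  moreover have "(\<Sum>j<n. A $$ (i, j) * v $ j) = s * v $ i" if "i < n" for i
    using arg_cong[OF v(3), of "\<lambda>w. w $ i"] that v(1) assms(1) by (simp del: index_mult_mat_vec add: mult_mat_vec_sum)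
  ultimately show ?thesis using that by blast
qed

lemma pos_semidef_eigenvalue_nonneg:
  assumes "N \<in> carrier_mat n n" "pos_semidef n N" "eigenvalue N e"
  shows "0 \<le> e"
proof -
  obtain x where x: "\<exists>i<n. x i \<noteq> 0" "\<And>i. i < n \<Longrightarrow> mat_apply N n x i = e * x i"
    using eigenvalueE_components[OF assms(1,3)] unfolding mat_apply_def by blast
  then have "0 \<le> e * sum_sq n x"
    using assms(2) quad_form_eigen[of n N x e] unfolding pos_semidef_def by metis
  moreover have "0 < sum_sq n x" using x(1) sum_sq_pos_iff by blast
  ultimately show ?thesis by (simp add: zero_le_mult_iff)
qed

lemma pos_def_eigenvalue_pos:
  assumes "N \<in> carrier_mat n n" "pos_def n N" "eigenvalue N e"
  shows "0 < e"
proof -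
  obtain x where x: "\<exists>i<n. x i \<noteq> 0" "\<And>i. i < n \<Longrightarrow> mat_apply N n x i = e * x i"
    using eigenvalueE_components[OF assms(1,3)] unfolding mat_apply_def by blast
  then have "0 < e * sum_sq n x"
    using assms(2) quad_form_eigen[of n N x e] unfolding pos_def_def by metis
  moreover have "0 < sum_sq n x" using x(1) sum_sq_pos_iff by blast
  ultimately show ?thesis by (simp add: zero_less_mult_iff)
qed

lemma eigenvalue_diag_preconditioned:
  fixes \<theta> :: complex
  assumes A: "A \<in> carrier_mat n n" and P: "P \<in> carrier_mat n n"
    and right_inv: "mat_diag n d * P = 1\<^sub>m n"
    and \<theta>: "eigenvalue (map_mat complex_of_real (P * A)) \<theta>"
  obtains v where "\<exists>i<n. v i \<noteq> 0"
    "\<And>i. i < n \<Longrightarrow> (\<Sum>j<n. of_real (A $$ (i, j)) * v j) = \<theta> * of_real (d i) * v i"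
proof -
  define B where "B = P * A"
  have B: "B \<in> carrier_mat n n" unfolding B_def using P A by simp
  have "mat_diag n d * B = mat_diag n d * P * A"
    unfolding B_def by (rule assoc_mult_mat[OF mat_diag_dim P A, symmetric])
  also have "\<dots> = A" using right_inv A by simp
  finally have "A = mat n n (\<lambda>(i, j). d i * B $$ (i, j))"
    using mat_diag_mult_left[OF B] by simp
  then have A_entry: "A $$ (i, j) = d i * B $$ (i, j)" if "i < n" "j < n" for i j
    using that by simp
  obtain v where v: "\<exists>i<n. v i \<noteq> 0"
    and ev: "\<And>i. i < n \<Longrightarrow> (\<Sum>j<n. map_mat complex_of_real B $$ (i, j) * v j) = \<theta> * v i"
    using eigenvalueE_components[of "map_mat complex_of_real B" n \<theta>] B \<theta> unfolding B_def by auto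
  have "(\<Sum>j<n. of_real (A $$ (i, j)) * v j) = \<theta> * of_real (d i) * v i" if "i < n" for i
  proof -
    have "(\<Sum>j<n. of_real (A $$ (i, j)) * v j)
        = of_real (d i) * (\<Sum>j<n. map_mat complex_of_real B $$ (i, j) * v j)"
      unfolding sum_distrib_left by (intro sum.cong refl) (simp add: A_entry that carrier_matD[OF B])
    then show ?thesis using ev[OF that] by simp
  qed
  then show ?thesis using that v by blast
qed

text \<open>The Hermitian form of \<open>N\<close> at \<open>v\<close> is real by symmetry of \<open>N\<close>, and it equals \<open>\<theta>\<close> times
  the positive number \<open>\<Sum>i<n. d i * (cmod (v i))\<^sup>2\<close>.\<close>

lemma sym_pencil_eigenvalue_real:
  fixes v :: "nat \<Rightarrow> complex"
  assumes sym: "sym_mat n N" and d: "\<And>i. i < n \<Longrightarrow> 0 < d i" and v: "\<exists>i<n. v i \<noteq> 0"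
    and eq: "\<And>i. i < n \<Longrightarrow> (\<Sum>j<n. of_real (N $$ (i, j)) * v j) = \<theta> * of_real (d i) * v i"
  shows "\<theta> \<in> \<real>"
proof -
  define z where "z = (\<Sum>i<n. \<Sum>j<n. cnj (v i) * of_real (N $$ (i, j)) * v j)"
  define D where "D = (\<Sum>i<n. d i * (cmod (v i))\<^sup>2)"
  have "z = (\<Sum>i<n. cnj (v i) * (\<Sum>j<n. of_real (N $$ (i, j)) * v j))"
    unfolding z_def by (simp add: sum_distrib_left mult.assoc)
  also have "\<dots> = (\<Sum>i<n. cnj (v i) * (\<theta> * of_real (d i) * v i))"
    by (intro sum.cong refl) (simp add: eq)
  also have "\<dots> = \<theta> * of_real D"
  proof -
    have reorder: "cnj (v i) * (\<theta> * of_real (d i) * v i) = \<theta> * (of_real (d i) * (cnj (v i) * v i))"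
      for i by (simp only: ac_simps)
    have norm: "cnj (v i) * v i = of_real ((cmod (v i))\<^sup>2)" for i
      by (metis complex_norm_square mult.commute)
    show ?thesis
      unfolding D_def of_real_sum sum_distrib_left of_real_mult
      by (intro sum.cong refl) (simp only: reorder norm)
  qed
  finally have z: "z = \<theta> * of_real D" .
  have "cnj z = (\<Sum>i<n. \<Sum>j<n. v i * of_real (N $$ (i, j)) * cnj (v j))"
    unfolding z_def by simp
  also have "\<dots> = (\<Sum>j<n. \<Sum>i<n. v i * of_real (N $$ (i, j)) * cnj (v j))"
    by (rule sum.swap)
  also have "\<dots> = z"
    using sym unfolding z_def sym_mat_def by (auto intro!: sum.cong simp: algebra_simps)
  finally have "cnj z = z" .
  then have "cnj \<theta> * of_real D = \<theta> * of_real D" unfolding z by simp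
  moreover have "0 < D"
  proof -
    obtain k where k: "k < n" "v k \<noteq> 0" using v by blast
    have "0 < d k * (cmod (v k))\<^sup>2" using d[OF k(1)] k(2) by simp
    moreover have "0 \<le> d i * (cmod (v i))\<^sup>2" if "i < n" for i using d[OF that] by simp
    ultimately show ?thesis unfolding D_def using k(1) by (intro sum_pos2[of _ k]) auto
  qed
  ultimately have "cnj \<theta> = \<theta>" by simp
  then show ?thesis by (simp add: Reals_cnj_iff)
qed

lemma sym_pencil_real_eigenvector:
  fixes v :: "nat \<Rightarrow> complex"
  assumes sym: "sym_mat n N" and d: "\<And>i. i < n \<Longrightarrow> 0 < d i" and v: "\<exists>i<n. v i \<noteq> 0"
    and eq: "\<And>i. i < n \<Longrightarrow> (\<Sum>j<n. of_real (N $$ (i, j)) * v j) = \<theta> * of_real (d i) * v i"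
  shows "\<exists>x. (\<exists>i<n. x i \<noteq> 0) \<and> (\<forall>i<n. mat_apply N n x i = Re \<theta> * d i * x i)"
proof -
  have "\<theta> \<in> \<real>" by (rule sym_pencil_eigenvalue_real[OF assms])
  then obtain t where t: "\<theta> = of_real t" by (rule Reals_cases)
  have re: "mat_apply N n (\<lambda>j. Re (v j)) i = Re \<theta> * d i * Re (v i)"
    and im: "mat_apply N n (\<lambda>j. Im (v j)) i = Re \<theta> * d i * Im (v i)" if "i < n" for i
  proof -
    have "(\<Sum>j<n. of_real (N $$ (i, j)) * v j) = of_real (t * d i) * v i"
      using eq[OF that] unfolding t by simp
    from arg_cong[OF this, of Re] arg_cong[OF this, of Im]
    show "mat_apply N n (\<lambda>j. Re (v j)) i = Re \<theta> * d i * Re (v i)"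
      and "mat_apply N n (\<lambda>j. Im (v j)) i = Re \<theta> * d i * Im (v i)"
      unfolding mat_apply_def Re_sum Im_sum t by simp_all
  qed
  obtain k where k: "k < n" "v k \<noteq> 0" using v by blast
  show ?thesis
  proof (cases "Re (v k) = 0")
    case True
    then have "Im (v k) \<noteq> 0" using k(2) complex_eqI[of "v k" 0] by auto
    then show ?thesis using im k(1) by (intro exI[of _ "\<lambda>j. Im (v j)"]) auto
  next
    case False
    then show ?thesis using re k(1) by (intro exI[of _ "\<lambda>j. Re (v j)"]) auto
  qed
qed

lemma sym_eigenvalue_real:
  assumes N: "N \<in> carrier_mat n n" and sym: "sym_mat n N"
    and a: "eigenvalue (map_mat complex_of_real N) a"
  shows "a \<in> \<real>"
proof -
  have N': "map_mat complex_of_real N \<in> carrier_mat n n" using N by simp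
  obtain v where v: "\<exists>i<n. v i \<noteq> 0"
    and ev: "\<And>i. i < n \<Longrightarrow> (\<Sum>j<n. map_mat complex_of_real N $$ (i, j) * v j) = a * v i"
    using eigenvalueE_components[OF N' a] by blast
  have eq: "(\<Sum>j<n. of_real (N $$ (i, j)) * v j) = a * of_real 1 * v i" if "i < n" for i
  proof -
    have "(\<Sum>j<n. of_real (N $$ (i, j)) * v j) = (\<Sum>j<n. map_mat complex_of_real N $$ (i, j) * v j)"
      using that N by (intro sum.cong) auto
    then show ?thesis using ev[OF that] by simp
  qed
  show ?thesis using sym_pencil_eigenvalue_real[OF sym _ v eq] by simp
qed

lemma poly_linear_factors_eq_0_iff:
  "poly (\<Prod>e\<leftarrow>es. [:- e, 1:]) x = 0 \<longleftrightarrow> x \<in> set es" for x :: "'a :: idom"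
  by (induct es) auto

lemma poly_linear_factors_0:
  "poly (\<Prod>e\<leftarrow>es. [:- e, 1:]) 0 = (-1) ^ length es * prod_list es" for es :: "'a :: comm_ring_1 list"
  by (induct es) auto

lemma prod_list_linear_factors_sort:
  "(\<Prod>e\<leftarrow>sort es. [:- e, 1:]) = (\<Prod>e\<leftarrow>es. [:- e, 1:] :: 'a :: {linorder, comm_ring_1} poly)"
proof -
  have "(\<Prod>e\<leftarrow>sort es. [:- e, 1:]) = prod_mset (mset (map (\<lambda>e. [:- e, 1:] :: 'a poly) (sort es)))"
    by (simp only: prod_mset_prod_list)
  also have "\<dots> = prod_mset (mset (map (\<lambda>e. [:- e, 1:]) es))" by simp
  also have "\<dots> = (\<Prod>e\<leftarrow>es. [:- e, 1:])" by (simp only: prod_mset_prod_list)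
  finally show ?thesis .
qed

lemma sym_char_poly_splits:
  assumes N: "N \<in> carrier_mat n n" and sym: "sym_mat n N"
  shows "\<exists>es. sorted es \<and> char_poly N = (\<Prod>e\<leftarrow>es. [:- e, 1:])"
proof -
  interpret of_real_poly: map_poly_inj_idom_hom complex_of_real ..
  let ?N = "map_mat complex_of_real N"
  have N': "?N \<in> carrier_mat n n" using N by simp
  obtain as where as: "char_poly ?N = (\<Prod>a\<leftarrow>as. [:- a, 1:])"
    using char_poly_factorized[OF N'] by blast
  have re: "complex_of_real (Re a) = a" if "a \<in> set as" for a
  proof -
    have "poly (char_poly ?N) a = 0" using that as poly_linear_factors_eq_0_iff by metis
    then have "eigenvalue ?N a" using eigenvalue_root_char_poly[OF N'] by simp
    then show ?thesis using sym_eigenvalue_real[OF N sym] of_real_Re by blast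
  qed
  have as_real: "map (\<lambda>e. [:- complex_of_real e, 1:]) (map Re as) = map (\<lambda>a. [:- a, 1:]) as"
    using re by simp
  define es where "es = sort (map Re as)"
  have "map_poly complex_of_real (\<Prod>e\<leftarrow>es. [:- e, 1:])
      = map_poly complex_of_real (\<Prod>e\<leftarrow>map Re as. [:- e, 1:])"
    unfolding es_def prod_list_linear_factors_sort ..
  also have "\<dots> = (\<Prod>e\<leftarrow>map Re as. [:- complex_of_real e, 1:])"
    by (simp add: of_real_poly.hom_prod_list o_def)
  also have "\<dots> = (\<Prod>a\<leftarrow>as. [:- a, 1:])"
    using as_real by metis
  also have "\<dots> = map_poly complex_of_real (char_poly N)"
    using as of_real_hom.char_poly_hom[OF N] by metis
  finally have "char_poly N = (\<Prod>e\<leftarrow>es. [:- e, 1:])" by (simp add: of_real_poly.eq_iff)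
  moreover have "sorted es" unfolding es_def by simp
  ultimately show ?thesis by blast
qed

lemma sym_sorted_real_eigenvalues:
  assumes N: "N \<in> carrier_mat n n" and sym: "sym_mat n N"
  shows "sorted (sorted_real_eigenvalues N)"
    and "char_poly N = (\<Prod>e\<leftarrow>sorted_real_eigenvalues N. [:- e, 1:])"
    and "length (sorted_real_eigenvalues N) = n"
proof -
  show sorted: "sorted (sorted_real_eigenvalues N)"
    and cp: "char_poly N = (\<Prod>e\<leftarrow>sorted_real_eigenvalues N. [:- e, 1:])"
    using someI_ex[OF sym_char_poly_splits[OF N sym]]
    unfolding sorted_real_eigenvalues_def by blast+
  have "length (sorted_real_eigenvalues N) = degree (char_poly N)"
    unfolding cp by (simp add: degree_linear_factors)
  then show "length (sorted_real_eigenvalues N) = n"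
    using degree_monic_char_poly[OF N] by simp
qed

lemma sym_eigenvalue_iff_mem_sorted_real_eigenvalues:
  assumes "N \<in> carrier_mat n n" "sym_mat n N"
  shows "eigenvalue N e \<longleftrightarrow> e \<in> set (sorted_real_eigenvalues N)"
  using eigenvalue_root_char_poly[OF assms(1)] sym_sorted_real_eigenvalues(2)[OF assms]
    poly_linear_factors_eq_0_iff by metis

lemma pos_def_char_poly_0:
  assumes N: "N \<in> carrier_mat n n" and sym: "sym_mat n N" and pd: "pos_def n N"
  shows "0 < (-1) ^ n * poly (char_poly N) 0"
proof -
  let ?es = "sorted_real_eigenvalues N"
  have "0 < e" if "e \<in> set ?es" for e
    using pos_def_eigenvalue_pos[OF N pd] sym_eigenvalue_iff_mem_sorted_real_eigenvalues[OF N sym] that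
    by blast
  moreover have "0 < prod_list es" if "\<forall>e\<in>set es. 0 < e" for es :: "real list"
    using that by (induct es) auto
  ultimately have "0 < prod_list ?es" by blast
  moreover have "poly (char_poly N) 0 = (-1) ^ n * prod_list ?es"
    using sym_sorted_real_eigenvalues(2,3)[OF N sym] poly_linear_factors_0 by metis
  ultimately show ?thesis by (simp add: mult.assoc[symmetric])
qed

lemma eigenvalue_abs_le_spectral_radius:
  assumes N: "N \<in> carrier_mat n n" and e: "eigenvalue N e"
  shows "\<bar>e\<bar> \<le> spectral_radius (map_mat complex_of_real N)"
proof -
  have "eigenvalue (map_mat complex_of_real N) (of_real e)"
    using of_real_hom.eigenvalue_hom[OF N e] .
  then have "norm (complex_of_real e) \<in> norm ` spectrum (map_mat complex_of_real N)"
    unfolding spectrum_def by blast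
  moreover have "0 < n" using eigenvalue_imp_nonzero_dim[OF N e] by simp
  ultimately show ?thesis
    using spectral_radius_mem_max(2)[of "map_mat complex_of_real N" n] N by auto
qed

lemma quad_form_le_spectral_radius:
  assumes N: "N \<in> carrier_mat n n" and sym: "sym_mat n N"
  shows "quad_form N n y \<le> spectral_radius (map_mat complex_of_real N) * sum_sq n y"
proof (cases "n = 0")
  case True
  then show ?thesis by (simp add: quad_form_def sum_sq_def)
next
  case False
  define M where "M = mat n n (\<lambda>(i, j). - N $$ (i, j))"
  have M_apply: "mat_apply M n x i = - mat_apply N n x i" if "i < n" for x i
    using that unfolding M_def mat_apply_def by (simp add: sum_negf)
  have sym_M: "sym_mat n M" using sym unfolding sym_mat_def M_def by auto
  have "0 < n" using False by simp
  obtain s x where x: "\<exists>i<n. x i \<noteq> 0" "\<And>i. i < n \<Longrightarrow> mat_apply M n x i = s * x i"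
    and s: "\<And>y. s * sum_sq n y \<le> quad_form M n y"
    by (rule min_eigenpair[OF \<open>0 < n\<close> sym_M]) blast
  have "mat_apply N n x i = - s * x i" if "i < n" for i
    using x(2)[OF that] M_apply[OF that] by simp
  then have "eigenvalue N (- s)"
    using eigenvalueI_components[OF N x(1)] unfolding mat_apply_def by blast
  then have "\<bar>s\<bar> \<le> spectral_radius (map_mat complex_of_real N)"
    using eigenvalue_abs_le_spectral_radius[OF N] by fastforce
  moreover have "quad_form M n y = (\<Sum>i<n. - (y i * mat_apply N n y i))"
    unfolding quad_form_mat_apply by (intro sum.cong) (simp_all add: M_apply)
  ultimately have "quad_form N n y \<le> - s * sum_sq n y"
    using s[of y] by (simp add: sum_negf quad_form_mat_apply)
  also have "\<dots> \<le> spectral_radius (map_mat complex_of_real N) * sum_sq n y"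
    using \<open>\<bar>s\<bar> \<le> _\<close> sum_sq_nonneg[of n y] by (intro mult_right_mono) auto
  finally show ?thesis .
qed

lemma sum_lessThan_Suc_insert_index:
  fixes f :: "nat \<Rightarrow> 'a :: comm_monoid_add"
  assumes "i < Suc m"
  shows "(\<Sum>a<Suc m. f a) = f i + (\<Sum>k<m. f (insert_index i k))"
proof -
  have "{..<Suc m} = insert i (insert_index i ` {..<m})"
    using insert_index_image[OF assms] assms by (auto simp: lessThan_atLeast0)
  moreover have "i \<notin> insert_index i ` {..<m}" by (auto simp: insert_index_def)
  ultimately show ?thesis by (simp add: sum.reindex[OF insert_index_inj_on])
qed

lemma quad_form_mat_delete:
  assumes N: "N \<in> carrier_mat (Suc m) (Suc m)" and i: "i < Suc m"
  shows "quad_form (mat_delete N i i) m y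
    = quad_form N (Suc m) (\<lambda>a. if a = i then 0 else y (delete_index i a))"
    (is "_ = quad_form N (Suc m) ?z")
proof -
  have z: "?z (insert_index i k) = y k" for k
  proof -
    have "insert_index i k \<noteq> i" by (simp add: insert_index_def)
    then show ?thesis by simp
  qed
  have "quad_form N (Suc m) ?z
      = (\<Sum>k<m. \<Sum>l<m. y k * N $$ (insert_index i k, insert_index i l) * y l)"
    unfolding quad_form_def sum_lessThan_Suc_insert_index[OF i] z by simp
  also have "\<dots> = quad_form (mat_delete N i i) m y"
    unfolding quad_form_def by (intro sum.cong refl) (simp add: mat_delete_index[OF N i i])
  finally show ?thesis ..
qed

lemma sym_mat_delete:
  assumes N: "N \<in> carrier_mat (Suc m) (Suc m)" and sym: "sym_mat (Suc m) N" and i: "i < Suc m"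
  shows "sym_mat m (mat_delete N i i)"
  unfolding sym_mat_def
proof (intro allI impI)
  fix k l assume kl: "k < m" "l < m"
  have "insert_index i a < Suc m" if "a < m" for a using that by (simp add: insert_index_def)
  then have "N $$ (insert_index i k, insert_index i l) = N $$ (insert_index i l, insert_index i k)"
    using sym kl unfolding sym_mat_def by blast
  then show "mat_delete N i i $$ (k, l) = mat_delete N i i $$ (l, k)"
    by (simp add: mat_delete_index[OF N i i] kl)
qed

section \<open>Laplacians of weighted graphs\<close>

definition weighted_degree :: "real mat \<Rightarrow> nat \<Rightarrow> real vec" where
  "weighted_degree G n = G *\<^sub>v vec n (\<lambda>_. 1)"

definition laplacian :: "real mat \<Rightarrow> nat \<Rightarrow> real mat" where
  "laplacian G n = mat_diag n (\<lambda>i. weighted_degree G n $ i) - G"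

locale weight_matrix =
  fixes n :: nat and G :: "real mat"
  assumes carrier: "G \<in> carrier_mat n n"
    and symmetric: "transpose_mat G = G"
    and nonneg: "\<And>i j. i < n \<Longrightarrow> j < n \<Longrightarrow> 0 \<le> G $$ (i, j)"
begin

abbreviation L where "L \<equiv> laplacian G n"
abbreviation deg where "deg \<equiv> weighted_degree G n"

lemma weight_sym: "i < n \<Longrightarrow> j < n \<Longrightarrow> G $$ (i, j) = G $$ (j, i)"
  by (metis carrier symmetric carrier_matD index_transpose_mat(1))

lemma weighted_degree_index: "i < n \<Longrightarrow> deg $ i = (\<Sum>j<n. G $$ (i, j))"
  unfolding weighted_degree_def using carrier by (simp del: index_mult_mat_vec add: mult_mat_vec_sum)

lemma weighted_degree_nonneg: "i < n \<Longrightarrow> 0 \<le> deg $ i"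
  using nonneg by (auto simp: weighted_degree_index intro!: sum_nonneg)

lemma laplacian_carrier: "L \<in> carrier_mat n n"
  unfolding laplacian_def by (rule minus_carrier_mat[OF carrier])

lemma laplacian_index:
  "i < n \<Longrightarrow> j < n \<Longrightarrow> L $$ (i, j) = (if i = j then deg $ i else 0) - G $$ (i, j)"
  unfolding laplacian_def mat_diag_def using carrier by auto

lemma sym_laplacian: "sym_mat n L"
  unfolding sym_mat_def by (simp add: laplacian_index weight_sym)

lemma laplacian_mat_apply_ones: "i < n \<Longrightarrow> mat_apply L n (\<lambda>_. 1) i = 0"
  unfolding mat_apply_def by (simp add: laplacian_index sum_subtractf weighted_degree_index)

lemma weighted_degree_sum_sq_left: "(\<Sum>i<n. \<Sum>j<n. G $$ (i, j) * (x i)\<^sup>2) = (\<Sum>i<n. deg $ i * (x i)\<^sup>2)"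
  by (simp add: weighted_degree_index sum_distrib_right)

lemma weighted_degree_sum_sq_right: "(\<Sum>i<n. \<Sum>j<n. G $$ (i, j) * (x j)\<^sup>2) = (\<Sum>i<n. deg $ i * (x i)\<^sup>2)"
proof -
  have "(\<Sum>i<n. \<Sum>j<n. G $$ (i, j) * (x j)\<^sup>2) = (\<Sum>j<n. \<Sum>i<n. G $$ (i, j) * (x j)\<^sup>2)"
    by (rule sum.swap)
  also have "\<dots> = (\<Sum>j<n. \<Sum>i<n. G $$ (j, i) * (x j)\<^sup>2)"
    by (auto simp: weight_sym intro!: sum.cong)
  finally show ?thesis by (simp add: weighted_degree_sum_sq_left)
qed

lemma quad_form_laplacian:
  "quad_form L n x = (\<Sum>i<n. \<Sum>j<n. G $$ (i, j) * (x i - x j)\<^sup>2) / 2"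
proof -
  have "quad_form L n x = (\<Sum>i<n. \<Sum>j<n. (if i = j then deg $ i * (x i)\<^sup>2 else 0) - x i * G $$ (i, j) * x j)"
    unfolding quad_form_def
    by (intro sum.cong refl) (simp add: laplacian_index algebra_simps power2_eq_square)
  also have "\<dots> = (\<Sum>i<n. deg $ i * (x i)\<^sup>2) - (\<Sum>i<n. \<Sum>j<n. x i * G $$ (i, j) * x j)"
    by (simp add: sum_subtractf)
  also have "\<dots> = (\<Sum>i<n. \<Sum>j<n. G $$ (i, j) * (x i - x j)\<^sup>2) / 2"
    using weighted_degree_sum_sq_left[of x] weighted_degree_sum_sq_right[of x]
    by (simp add: power2_diff sum_subtractf sum.distrib sum_distrib_left algebra_simps)
  finally show ?thesis .
qed

lemma laplacian_pos_semidef: "pos_semidef n L"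
  unfolding pos_semidef_def quad_form_laplacian by (auto intro!: sum_nonneg simp: nonneg)

lemma quad_form_laplacian_le: "quad_form L n x \<le> 2 * (\<Sum>i<n. deg $ i * (x i)\<^sup>2)"
proof -
  have "(x i - x j)\<^sup>2 \<le> 2 * (x i)\<^sup>2 + 2 * (x j)\<^sup>2" for i j
    using sum_squares_ge_zero[of "x i + x j" 0] by (simp add: power2_eq_square algebra_simps)
  then have "(\<Sum>i<n. \<Sum>j<n. G $$ (i, j) * (x i - x j)\<^sup>2)
      \<le> (\<Sum>i<n. \<Sum>j<n. G $$ (i, j) * (2 * (x i)\<^sup>2 + 2 * (x j)\<^sup>2))"
    by (intro sum_mono mult_left_mono) (auto simp: nonneg)
  also have "\<dots> = 2 * (\<Sum>i<n. \<Sum>j<n. G $$ (i, j) * (x i)\<^sup>2) + 2 * (\<Sum>i<n. \<Sum>j<n. G $$ (i, j) * (x j)\<^sup>2)"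
    by (simp add: sum.distrib sum_distrib_left algebra_simps)
  also have "\<dots> = 4 * (\<Sum>i<n. deg $ i * (x i)\<^sup>2)"
    unfolding weighted_degree_sum_sq_left weighted_degree_sum_sq_right by simp
  finally show ?thesis unfolding quad_form_laplacian by simp
qed

lemma degree_sum_sq_le_Max: "(\<Sum>i<n. deg $ i * (x i)\<^sup>2) \<le> Max {deg $ i | i. i < n} * sum_sq n x"
proof -
  have "deg $ i \<le> Max {deg $ i | i. i < n}" if "i < n" for i
    using that by (intro Max_ge) auto
  then show ?thesis
    unfolding sum_sq_def sum_distrib_left by (intro sum_mono mult_right_mono) auto
qed

lemma jacobi_preconditioned_eigenvalue:
  fixes lam mu :: real and Pinv :: "real mat" and \<theta> :: complex
  assumes diag: "\<And>i. i < n \<Longrightarrow> G $$ (i, i) = 0" and lam: "0 < lam" and mu: "0 < mu"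
    and Pinv: "Pinv \<in> carrier_mat n n"
    and right_inv: "mat_diag n (\<lambda>i. (lam \<cdot>\<^sub>m 1\<^sub>m n + mu \<cdot>\<^sub>m L) $$ (i, i)) * Pinv = 1\<^sub>m n"
    and \<theta>: "eigenvalue (map_mat complex_of_real (Pinv * (lam \<cdot>\<^sub>m 1\<^sub>m n + mu \<cdot>\<^sub>m L))) \<theta>"
  shows "\<theta> \<in> \<real> \<and> (\<exists>x. (\<exists>i<n. x i \<noteq> 0) \<and> Re \<theta> * (lam * sum_sq n x + mu * (\<Sum>i<n. deg $ i * (x i)\<^sup>2))
    = lam * sum_sq n x + mu * quad_form L n x)"
proof -
  define A where "A = lam \<cdot>\<^sub>m 1\<^sub>m n + mu \<cdot>\<^sub>m L"
  define d where "d i = lam + mu * deg $ i" for i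
  have A: "A \<in> carrier_mat n n" unfolding A_def using laplacian_carrier by simp
  have A_diag: "A $$ (i, i) = d i" if "i < n" for i
    using that diag laplacian_carrier by (simp add: A_def d_def laplacian_index)
  have d_pos: "0 < d i" if "i < n" for i
    using weighted_degree_nonneg[OF that] lam mu unfolding d_def by (simp add: add_pos_nonneg)
  have sym_A: "sym_mat n A"
    using sym_laplacian laplacian_carrier unfolding sym_mat_def A_def by auto
  have "mat_diag n d = mat_diag n (\<lambda>i. A $$ (i, i))"
    using A_diag by (auto simp: mat_diag_def)
  then have d_inv: "mat_diag n d * Pinv = 1\<^sub>m n" using right_inv unfolding A_def by simp
  obtain v where v: "\<exists>i<n. v i \<noteq> 0"
    and pencil: "\<And>i. i < n \<Longrightarrow> (\<Sum>j<n. of_real (A $$ (i, j)) * v j) = \<theta> * of_real (d i) * v i"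
    using eigenvalue_diag_preconditioned[OF A Pinv d_inv \<theta>[folded A_def]] by blast
  obtain x where x: "\<exists>i<n. x i \<noteq> 0" and x_ev: "\<And>i. i < n \<Longrightarrow> mat_apply A n x i = Re \<theta> * d i * x i"
    using sym_pencil_real_eigenvector[OF sym_A d_pos v pencil] by blast
  have "quad_form A n x = Re \<theta> * (\<Sum>i<n. d i * (x i)\<^sup>2)"
    by (rule quad_form_pencil) (rule x_ev)
  moreover have "(\<Sum>i<n. d i * (x i)\<^sup>2) = lam * sum_sq n x + mu * (\<Sum>i<n. deg $ i * (x i)\<^sup>2)"
    unfolding d_def sum_sq_def by (simp add: distrib_right sum.distrib sum_distrib_left mult.assoc)
  ultimately show ?thesis
    using sym_pencil_eigenvalue_real[OF sym_A d_pos v pencil] x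
      quad_form_smult_one_add[OF laplacian_carrier] unfolding A_def by auto
qed

end

section \<open>Algebraic connectivity\<close>

definition fiedler_shift :: "real mat \<Rightarrow> nat \<Rightarrow> real \<Rightarrow> real mat" where
  "fiedler_shift N n a = mat n n (\<lambda>(i, j). N $$ (i, j) + a / real n - (if i = j then a else 0))"

lemma mat_apply_fiedler_shift:
  assumes "k < n"
  shows "mat_apply (fiedler_shift N n a) n x k = mat_apply N n x k + a / real n * (\<Sum>l<n. x l) - a * x k"
proof -
  have "mat_apply (fiedler_shift N n a) n x k
      = (\<Sum>l<n. N $$ (k, l) * x l + a / real n * x l - (if l = k then a * x l else 0))"
    unfolding mat_apply_def
  proof (intro sum.cong refl)
    fix l assume "l \<in> {..<n}"
    then show "fiedler_shift N n a $$ (k, l) * x l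
        = N $$ (k, l) * x l + a / real n * x l - (if l = k then a * x l else 0)"
      using assms unfolding fiedler_shift_def
      by (cases "l = k") (simp_all add: distrib_right left_diff_distrib)
  qed
  also have "\<dots> = mat_apply N n x k + a / real n * (\<Sum>l<n. x l) - a * x k"
    using assms by (simp add: sum.distrib sum_subtractf sum_distrib_left mat_apply_def)
  finally show ?thesis .
qed

lemma sym_fiedler_shift: "sym_mat n N \<Longrightarrow> sym_mat n (fiedler_shift N n a)"
  unfolding sym_mat_def fiedler_shift_def by auto

lemma fiedler_shift_diag: "i < n \<Longrightarrow> fiedler_shift N n a $$ (i, i) = N $$ (i, i) + a / real n - a"
  unfolding fiedler_shift_def by simp

locale connected_weight_matrix = weight_matrix +
  assumes connected: "weight_graph_connected n G"
begin

lemma quad_form_laplacian_eq_0_imp_const: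
  assumes x: "quad_form L n x = 0" and ij: "i < n" "j < n"
  shows "x i = x j"
proof -
  have edge: "x k = x l" if kl: "k < n" "l < n" "0 < G $$ (k, l)" for k l
  proof -
    define r where "r k' = (\<Sum>l<n. G $$ (k', l) * (x k' - x l)\<^sup>2)" for k'
    have "0 \<le> r k'" if "k' < n" for k'
      using that nonneg unfolding r_def by (auto intro!: sum_nonneg)
    moreover have "(\<Sum>k<n. r k) = 0"
      using x unfolding quad_form_laplacian r_def by simp
    ultimately have "r k = 0"
      using sum_nonneg_eq_0_iff[OF finite_lessThan, where f = r] kl(1) by simp
    moreover have "0 \<le> G $$ (k, l') * (x k - x l')\<^sup>2" if "l' < n" for l'
      using that nonneg kl(1) by simp
    ultimately have "G $$ (k, l) * (x k - x l)\<^sup>2 = 0"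
      using sum_nonneg_eq_0_iff[OF finite_lessThan, where f = "\<lambda>l. G $$ (k, l) * (x k - x l)\<^sup>2"] kl(2)
      unfolding r_def by simp
    then show ?thesis using kl(3) by simp
  qed
  have "(i, j) \<in> {(k, l). k < n \<and> l < n \<and> 0 < G $$ (k, l)}\<^sup>*"
    using connected ij unfolding weight_graph_connected_def by blast
  then show ?thesis
    by (induction rule: rtrancl_induct) (auto dest: edge)
qed

lemma laplacian_minor_pos_def:
  assumes i: "i < n"
  shows "pos_def (n - 1) (mat_delete L i i)"
  unfolding pos_def_def
proof (intro allI impI)
  obtain m where n: "n = Suc m" using i by (cases n) auto
  fix y :: "nat \<Rightarrow> real" assume "\<exists>k<n - 1. y k \<noteq> 0"
  then obtain k where k: "k < m" "y k \<noteq> 0" using n by auto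
  define z where "z a = (if a = i then 0 else y (delete_index i a))" for a
  have "quad_form (mat_delete L i i) (n - 1) y = quad_form L n z"
    using quad_form_mat_delete[of L m i y] laplacian_carrier i unfolding n z_def by simp
  moreover have "quad_form L n z \<noteq> 0"
  proof
    assume "quad_form L n z = 0"
    moreover have "insert_index i k < n" "insert_index i k \<noteq> i"
      using k(1) n by (auto simp: insert_index_def)
    ultimately have "z (insert_index i k) = z i"
      using quad_form_laplacian_eq_0_imp_const i by blast
    then show False using k(2) \<open>insert_index i k \<noteq> i\<close> by (simp add: z_def)
  qed
  ultimately show "0 < quad_form (mat_delete L i i) (n - 1) y"
    using laplacian_pos_semidef unfolding pos_semidef_def by (metis order_le_less)
qed

context
  assumes two_le_n: "2 \<le> n"
begin

lemma laplacian_eigenvalue_iff: "eigenvalue L e \<longleftrightarrow> e \<in> set (sorted_real_eigenvalues L)"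
  by (rule sym_eigenvalue_iff_mem_sorted_real_eigenvalues[OF laplacian_carrier sym_laplacian])

lemma laplacian_sorted_eigenvalue_nonneg: "k < n \<Longrightarrow> 0 \<le> sorted_real_eigenvalues L ! k"
  using pos_semidef_eigenvalue_nonneg[OF laplacian_carrier laplacian_pos_semidef] laplacian_eigenvalue_iff
    sym_sorted_real_eigenvalues(3)[OF laplacian_carrier sym_laplacian] nth_mem by metis

lemma smallest_laplacian_eigenvalue: "sorted_real_eigenvalues L ! 0 = 0"
proof -
  let ?es = "sorted_real_eigenvalues L"
  have "eigenvalue L 0"
    by (rule eigenvalueI_components[OF laplacian_carrier, of "\<lambda>_. 1"])
      (use two_le_n laplacian_mat_apply_ones in \<open>auto simp: mat_apply_def intro: exI[of _ 0]\<close>)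
  then obtain k where k: "k < length ?es" "?es ! k = 0"
    using laplacian_eigenvalue_iff by (metis in_set_conv_nth)
  have "?es ! 0 \<le> ?es ! k"
    using sorted_nth_mono[OF sym_sorted_real_eigenvalues(1)[OF laplacian_carrier sym_laplacian] _ k(1)]
    by simp
  moreover have "0 \<le> ?es ! 0" using laplacian_sorted_eigenvalue_nonneg two_le_n by simp
  ultimately show ?thesis using k(2) by simp
qed

text \<open>Zero is a simple root of the characteristic polynomial: its derivative at zero is the sum
  of the characteristic polynomials of the principal minors, all of the same strict sign
  because the minors are positive definite.\<close>

lemma algebraic_connectivity_pos: "0 < algebraic_connectivity L"
proof (rule ccontr)
  let ?es = "sorted_real_eigenvalues L"
  note es = sym_sorted_real_eigenvalues[OF laplacian_carrier sym_laplacian]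
  assume "\<not> 0 < algebraic_connectivity L"
  then have "?es ! 1 = 0"
    using laplacian_sorted_eigenvalue_nonneg[of 1] two_le_n
    unfolding algebraic_connectivity_def by simp
  moreover have "Suc (Suc 0) \<le> length ?es" using es(3) two_le_n by simp
  then obtain e0 e1 rest where split: "?es = e0 # e1 # rest"
    by (metis Suc_le_length_iff)
  moreover have "e0 = 0" using smallest_laplacian_eigenvalue split by simp
  ultimately have "char_poly L = [:0, 1:] * ([:0, 1:] * (\<Prod>e\<leftarrow>rest. [:- e, 1:]))"
    using es(2) by simp
  then have "poly (pderiv (char_poly L)) 0 = 0" by (simp add: pderiv_pCons)
  moreover have "0 < (-1) ^ (n - 1) * poly (pderiv (char_poly L)) 0"
  proof -
    have "(-1) ^ (n - 1) * poly (pderiv (char_poly L)) 0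
        = (\<Sum>i<n. (-1) ^ (n - 1) * poly (char_poly (mat_delete L i i)) 0)"
      by (simp add: pderiv_char_poly[OF laplacian_carrier] poly_sum sum_distrib_left)
    also have "0 < \<dots>"
    proof (rule sum_pos)
      fix i assume "i \<in> {..<n}"
      then have i: "i < n" by simp
      have "sym_mat (n - 1) (mat_delete L i i)"
        using sym_mat_delete[of L "n - 1" i] laplacian_carrier sym_laplacian i by simp
      then show "0 < (-1) ^ (n - 1) * poly (char_poly (mat_delete L i i)) 0"
        using pos_def_char_poly_0 mat_delete_carrier[OF laplacian_carrier] laplacian_minor_pos_def[OF i]
        by blast
    qed (use two_le_n in \<open>auto simp: lessThan_empty_iff\<close>)
    finally show ?thesis .
  qed
  ultimately show False by simp
qed

lemma laplacian_eigenvalue_below_connectivity: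
  assumes e: "eigenvalue L e" and less: "e < algebraic_connectivity L"
  shows "e = 0"
proof -
  let ?es = "sorted_real_eigenvalues L"
  obtain k where k: "k < length ?es" "?es ! k = e"
    using e laplacian_eigenvalue_iff by (metis in_set_conv_nth)
  have "k = 0"
  proof (rule ccontr)
    assume "k \<noteq> 0"
    then have "?es ! 1 \<le> ?es ! k"
      using sorted_nth_mono[OF sym_sorted_real_eigenvalues(1)[OF laplacian_carrier sym_laplacian] _ k(1)]
      by simp
    then show False using k(2) less unfolding algebraic_connectivity_def by simp
  qed
  then show ?thesis using k(2) smallest_laplacian_eigenvalue by simp
qed

lemma sum_eigenvector_fiedler_shift:
  assumes ev: "\<And>k. k < n \<Longrightarrow> mat_apply (fiedler_shift L n a) n x k = s * x k"
  shows "s * (\<Sum>k<n. x k) = 0"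
proof -
  have ones: "mat_apply (fiedler_shift L n a) n (\<lambda>_. 1) k = 0" if "k < n" for k
    using that two_le_n by (simp add: mat_apply_fiedler_shift laplacian_mat_apply_ones)
  have "s * (\<Sum>k<n. x k) = (\<Sum>k<n. 1 * mat_apply (fiedler_shift L n a) n x k)"
    unfolding sum_distrib_left by (intro sum.cong refl) (simp add: ev)
  also have "\<dots> = (\<Sum>k<n. x k * mat_apply (fiedler_shift L n a) n (\<lambda>_. 1) k)"
    by (rule mat_apply_sym_swap[OF sym_fiedler_shift[OF sym_laplacian]])
  also have "\<dots> = 0" by (intro sum.neutral) (simp add: ones)
  finally show ?thesis .
qed

text \<open>A negative eigenvalue \<open>s\<close> of the shift would have an eigenvector \<open>x\<close> summing to zero, so that
  \<open>L x = (s + a) x\<close> with \<open>s + a < a\<close>; then \<open>s + a = 0\<close>, and \<open>x\<close> is constant, hence zero.\<close>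

lemma fiedler_shift_eigenvalue_nonneg:
  assumes x: "\<exists>k<n. x k \<noteq> 0"
    and ev: "\<And>k. k < n \<Longrightarrow> mat_apply (fiedler_shift L n (algebraic_connectivity L)) n x k = s * x k"
  shows "0 \<le> s"
proof (rule ccontr)
  define a where "a = algebraic_connectivity L"
  assume "\<not> 0 \<le> s"
  then have sum0: "(\<Sum>k<n. x k) = 0" using sum_eigenvector_fiedler_shift[OF ev] by simp
  then have L_ev: "mat_apply L n x k = (s + a) * x k" if "k < n" for k
    using ev[OF that] that unfolding a_def by (simp add: mat_apply_fiedler_shift algebra_simps)
  then have "eigenvalue L (s + a)"
    using eigenvalueI_components[OF laplacian_carrier x] unfolding mat_apply_def by blast
  moreover have "s + a < algebraic_connectivity L" using \<open>\<not> 0 \<le> s\<close> unfolding a_def by simp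
  ultimately have "s + a = 0" by (rule laplacian_eigenvalue_below_connectivity)
  then have "quad_form L n x = 0 * sum_sq n x"
    by (intro quad_form_eigen) (simp add: L_ev)
  then have const: "x k = x 0" if "k < n" for k
    using quad_form_laplacian_eq_0_imp_const[of x k 0] that two_le_n by simp
  have "(\<Sum>k<n. x k) = (\<Sum>k<n. x 0)"
    by (intro sum.cong refl) (rule const, simp)
  then have "x 0 = 0" using sum0 two_le_n by simp
  moreover obtain k where "k < n" "x k \<noteq> 0" using x by blast
  ultimately show False using const[of k] by simp
qed

lemma fiedler_shift_pos_semidef: "pos_semidef n (fiedler_shift L n (algebraic_connectivity L))"
  unfolding pos_semidef_def
proof
  fix y
  have sym: "sym_mat n (fiedler_shift L n (algebraic_connectivity L))"
    by (rule sym_fiedler_shift[OF sym_laplacian])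
  have "0 < n" using two_le_n by simp
  obtain s x where x: "\<exists>k<n. x k \<noteq> 0"
    and ev: "\<And>k. k < n \<Longrightarrow> mat_apply (fiedler_shift L n (algebraic_connectivity L)) n x k = s * x k"
    and s: "\<And>y. s * sum_sq n y \<le> quad_form (fiedler_shift L n (algebraic_connectivity L)) n y"
    by (rule min_eigenpair[OF \<open>0 < n\<close> sym]) blast
  from x ev have "0 \<le> s" by (rule fiedler_shift_eigenvalue_nonneg)
  then have "0 \<le> s * sum_sq n y" using sum_sq_nonneg by simp
  also have "\<dots> \<le> quad_form (fiedler_shift L n (algebraic_connectivity L)) n y" by (rule s)
  finally show "0 \<le> quad_form (fiedler_shift L n (algebraic_connectivity L)) n y" .
qed

lemma algebraic_connectivity_le_laplacian_diag:
  assumes i: "i < n"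
  shows "algebraic_connectivity L * (real n - 1) \<le> real n * L $$ (i, i)"
proof -
  define a where "a = algebraic_connectivity L"
  have "0 \<le> quad_form (fiedler_shift L n a) n (\<lambda>k. if k = i then 1 else 0)"
    using fiedler_shift_pos_semidef unfolding pos_semidef_def a_def by blast
  then have "0 \<le> L $$ (i, i) + a / real n - a"
    using quad_form_unit_vector[OF i] fiedler_shift_diag[OF i] by simp
  then have "0 \<le> real n * (L $$ (i, i) + a / real n - a)" by simp
  then show ?thesis using two_le_n unfolding a_def by (simp add: algebra_simps)
qed

lemma algebraic_connectivity_le_spectral_radius:
  "algebraic_connectivity L \<le> spectral_radius (map_mat complex_of_real L)"
proof -
  have "sorted_real_eigenvalues L ! 1 \<in> set (sorted_real_eigenvalues L)"
    using sym_sorted_real_eigenvalues(3)[OF laplacian_carrier sym_laplacian] two_le_n by simp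
  then have "eigenvalue L (algebraic_connectivity L)"
    using laplacian_eigenvalue_iff two_le_n unfolding algebraic_connectivity_def by simp
  then show ?thesis
    using eigenvalue_abs_le_spectral_radius[OF laplacian_carrier] by fastforce
qed

lemma scaled_connectivity_pos: "0 < algebraic_connectivity L * (real n - 1) / real n"
  using algebraic_connectivity_pos two_le_n by simp

lemma scaled_connectivity_le_spectral_radius:
  "algebraic_connectivity L * (real n - 1) / real n \<le> spectral_radius (map_mat complex_of_real L)"
proof -
  have "algebraic_connectivity L * (real n - 1) / real n \<le> algebraic_connectivity L"
    using algebraic_connectivity_pos two_le_n by (simp add: divide_le_eq)
  also have "\<dots> \<le> spectral_radius (map_mat complex_of_real L)"
    by (rule algebraic_connectivity_le_spectral_radius)
  finally show ?thesis .
qed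

lemma connectivity_sum_sq_le_degree:
  assumes diag: "\<And>i. i < n \<Longrightarrow> G $$ (i, i) = 0"
  shows "algebraic_connectivity L * (real n - 1) / real n * sum_sq n x \<le> (\<Sum>i<n. deg $ i * (x i)\<^sup>2)"
proof -
  have "0 < real n" using two_le_n by simp
  have "algebraic_connectivity L * (real n - 1) / real n \<le> deg $ i" if "i < n" for i
    using algebraic_connectivity_le_laplacian_diag[OF that] laplacian_index[OF that that] diag[OF that]
      \<open>0 < real n\<close> by (simp add: divide_le_eq mult.commute)
  then show ?thesis
    unfolding sum_sq_def sum_distrib_left by (intro sum_mono mult_right_mono) auto
qed

end

end

section \<open>The Jacobi-preconditioned matrix\<close>

lemma rayleigh_quotient_bounds:
  fixes \<theta> lam mu S E Q M c \<rho> :: real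
  assumes lam: "0 < lam" and mu: "0 < mu" and S: "0 < S"
    and \<theta>: "\<theta> * (lam * S + mu * E) = lam * S + mu * Q"
    and Q: "0 \<le> Q" "Q \<le> 2 * E" "Q \<le> \<rho> * S"
    and E: "c * S \<le> E" "E \<le> M * S"
    and c: "0 < c" "c \<le> \<rho>"
  shows "lam / (lam + mu * M) \<le> \<theta>" and "\<theta> \<le> 2" and "\<theta> \<le> \<rho> / c"
proof -
  have "0 < c * S" using c(1) S by simp
  then have "0 < E" using E(1) by linarith
  then have D: "0 < lam * S + mu * E" using lam mu S by (simp add: add_pos_pos)
  have "0 < M * S" using \<open>0 < E\<close> E(2) by linarith
  then have "0 < M" using S by (simp add: zero_less_mult_iff)
  have "0 < lam * S" using lam S by simp
  have "mu * Q \<le> mu * (2 * E)" using Q(2) mu by simp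
  then have "lam * S + mu * Q \<le> 2 * (lam * S + mu * E)"
    using \<open>0 < lam * S\<close> by (simp add: algebra_simps)
  then have "\<theta> * (lam * S + mu * E) \<le> 2 * (lam * S + mu * E)" using \<theta> by simp
  then show "\<theta> \<le> 2" using D by (rule mult_right_le_imp_le)
  define R where "R = \<rho> / c"
  have "1 \<le> R" using c unfolding R_def by simp
  have "mu * Q \<le> mu * (R * (c * S))"
    using Q(3) mu c(1) unfolding R_def by (simp add: mult_left_mono)
  also have "\<dots> \<le> mu * (R * E)"
    using E(1) mu \<open>1 \<le> R\<close> by (simp add: mult_left_mono)
  moreover have "lam * S \<le> R * (lam * S)"
    using mult_right_mono[OF \<open>1 \<le> R\<close>, of "lam * S"] \<open>0 < lam * S\<close> by simp
  ultimately have "lam * S + mu * Q \<le> R * (lam * S) + mu * (R * E)" by linarith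
  also have "\<dots> = R * (lam * S + mu * E)" by (simp add: algebra_simps)
  finally have "\<theta> * (lam * S + mu * E) \<le> R * (lam * S + mu * E)" using \<theta> by simp
  then show "\<theta> \<le> \<rho> / c" using D unfolding R_def by (rule mult_right_le_imp_le)
  have "lam * S \<le> \<theta> * (lam * S + mu * E)" using \<theta> mu Q(1) by simp
  then have "0 < \<theta> * (lam * S + mu * E)" using \<open>0 < lam * S\<close> by linarith
  then have "0 \<le> \<theta>" using D by (simp add: zero_less_mult_iff)
  have "lam * S \<le> \<theta> * (lam * S + mu * E)" by fact
  also have "\<dots> \<le> \<theta> * ((lam + mu * M) * S)"
    using E(2) mu \<open>0 \<le> \<theta>\<close> by (intro mult_left_mono) (simp_all add: algebra_simps)
  finally have "lam \<le> \<theta> * (lam + mu * M)" using S by (simp add: mult.assoc[symmetric])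
  moreover have "0 < lam + mu * M" using lam mu \<open>0 < M\<close> by (simp add: add_pos_pos)
  ultimately show "lam / (lam + mu * M) \<le> \<theta>" by (simp add: pos_divide_le_eq)
qed

theorem lemma4p6:
  fixes n :: nat and \<Gamma> :: "real mat" and lam mu :: real and Pinv :: "real mat" and \<theta> :: complex
  assumes n2: "n \<ge> 2"
    and \<Gamma>_dim: "\<Gamma> \<in> carrier_mat n n"
    and \<Gamma>_sym: "transpose_mat \<Gamma> = \<Gamma>"
    and \<Gamma>_range: "\<forall>i<n. \<forall>j<n. 0 \<le> \<Gamma> $$ (i, j) \<and> \<Gamma> $$ (i, j) \<le> 1"
    and \<Gamma>_diag: "\<forall>i<n. \<Gamma> $$ (i, i) = 0"
    and \<Gamma>_rows: "\<forall>i<n. \<exists>j<n. j \<noteq> i \<and> \<Gamma> $$ (i, j) > 0"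
    and \<Gamma>_conn: "weight_graph_connected n \<Gamma>"
    and lam_pos: "lam > 0" and mu_pos: "mu > 0"
    and Pinv_dim: "Pinv \<in> carrier_mat n n"
    and Pinv_inv: "let \<eta> = \<Gamma> *\<^sub>v vec n (\<lambda>_. 1);
                       L = mat_diag n (\<lambda>i. \<eta> $ i) - \<Gamma>;
                       A = lam \<cdot>\<^sub>m 1\<^sub>m n + mu \<cdot>\<^sub>m L;
                       Pa = mat_diag n (\<lambda>i. A $$ (i, i))
                   in Pinv * Pa = 1\<^sub>m n \<and> Pa * Pinv = 1\<^sub>m n"
    and eig: "let \<eta> = \<Gamma> *\<^sub>v vec n (\<lambda>_. 1);
                  L = mat_diag n (\<lambda>i. \<eta> $ i) - \<Gamma>;
                  A = lam \<cdot>\<^sub>m 1\<^sub>m n + mu \<cdot>\<^sub>m L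
              in eigenvalue (map_mat complex_of_real (Pinv * A)) \<theta>"
  shows "let \<eta> = \<Gamma> *\<^sub>v vec n (\<lambda>_. 1);
             L = mat_diag n (\<lambda>i. \<eta> $ i) - \<Gamma>
         in \<theta> \<in> \<real> \<and>
            lam / (lam + mu * Max {\<eta> $ i | i. i < n}) \<le> Re \<theta> \<and>
            Re \<theta> \<le> min 2 (real n / (real n - 1) *
                   (spectral_radius (map_mat complex_of_real L) / algebraic_connectivity L))"
proof -
  interpret connected_weight_matrix n \<Gamma>
    using \<Gamma>_dim \<Gamma>_sym \<Gamma>_range \<Gamma>_conn by unfold_locales auto
  have deg_eq: "\<Gamma> *\<^sub>v vec n (\<lambda>_. 1) = weighted_degree \<Gamma> n" unfolding weighted_degree_def ..
  have lap_eq: "mat_diag n (\<lambda>i. weighted_degree \<Gamma> n $ i) - \<Gamma> = laplacian \<Gamma> n"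
    unfolding laplacian_def ..
  have diag: "\<And>i. i < n \<Longrightarrow> \<Gamma> $$ (i, i) = 0" using \<Gamma>_diag by blast
  have right_inv: "mat_diag n (\<lambda>i. (lam \<cdot>\<^sub>m 1\<^sub>m n + mu \<cdot>\<^sub>m laplacian \<Gamma> n) $$ (i, i)) * Pinv = 1\<^sub>m n"
    using Pinv_inv unfolding Let_def deg_eq lap_eq by (rule conjunct2)
  have ev: "eigenvalue (map_mat complex_of_real (Pinv * (lam \<cdot>\<^sub>m 1\<^sub>m n + mu \<cdot>\<^sub>m laplacian \<Gamma> n))) \<theta>"
    using eig unfolding Let_def deg_eq lap_eq .
  note jacobi_preconditioned_eigenvalue[OF diag lam_pos mu_pos Pinv_dim right_inv ev]
  then obtain x where real: "\<theta> \<in> \<real>" and x: "\<exists>i<n. x i \<noteq> 0"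
    and rayleigh: "Re \<theta> * (lam * sum_sq n x + mu * (\<Sum>i<n. weighted_degree \<Gamma> n $ i * (x i)\<^sup>2))
      = lam * sum_sq n x + mu * quad_form (laplacian \<Gamma> n) n x" by blast
  have S: "0 < sum_sq n x" using x sum_sq_pos_iff by blast
  note bounds = rayleigh_quotient_bounds[OF lam_pos mu_pos S rayleigh
      laplacian_pos_semidef[unfolded pos_semidef_def, rule_format] quad_form_laplacian_le
      quad_form_le_spectral_radius[OF laplacian_carrier sym_laplacian]
      connectivity_sum_sq_le_degree[OF n2 diag] degree_sum_sq_le_Max
      scaled_connectivity_pos[OF n2] scaled_connectivity_le_spectral_radius[OF n2]]
  from bounds(3) have "Re \<theta> \<le> real n / (real n - 1) *
      (spectral_radius (map_mat complex_of_real (laplacian \<Gamma> n)) / algebraic_connectivity (laplacian \<Gamma> n))"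
    by (simp add: ac_simps)
  then show ?thesis
    unfolding Let_def deg_eq lap_eq by (intro conjI min.boundedI real bounds(1,2))
qed

end
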